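(* Let nonempty active action sets $A_{l,i}\subseteq\mathcal{A}$ be given for all $(l,i)\in[k]\times[H]$, and let $\eta$ be the random exploration policy in which, independently for each state $(l,i)$, the action $e_{l,i}$ is drawn uniformly at random from $A_{l,i}$. Let $Q_{l,i}$ be the probability that $\eta$ visits state $(l,i)$ (over the random actions and the random transitions). Then for any $i\in[H-1]$ and $l,s\in[k]$, $$Q_{s,i+1}\ \ge\ \max_{a\in A_{l,i}}\frac{Q_{l,i}}{A}\,p_i(s\mid l,a).$$
   Context: An episodic MDP has states $(l,i)$, $l\in[k]$, $i\in[H]$, start state $(1,1)$, and an action set $\mathcal{A}$ of size $A$. For $i\in[H-1]$, action $a$ at state $(l,i)$ moves to state $(s,i+1)$ with probability $p_i(s\mid l,a)$, independently of everything else. A (possibly randomized) policy that fixes an action at every state is executed from $(1,1)$ by taking the assigned action at each visited state. *)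

theory Defs
  imports "HOL-Probability.Probability"
begin

text \<open>States are pairs (l,i) with l in {1..k} (label) and i in {1..H} (level).
  P i l a is the next-label distribution p_i( . | l, a).
  An action assignment e maps each state (l,i) to an action.\<close>

text \<open>Distribution of the label at level n+1 when executing the deterministic
  action assignment e from state (1,1).\<close>
fun traj :: "(nat \<Rightarrow> nat \<Rightarrow> 'a \<Rightarrow> nat pmf) \<Rightarrow> (nat \<times> nat \<Rightarrow> 'a) \<Rightarrow> nat \<Rightarrow> nat pmf" where
  "traj P e 0 = return_pmf 1"
| "traj P e (Suc n) = bind_pmf (traj P e n) (\<lambda>l. P (Suc n) l (e (l, Suc n)))"

definition explore_policy :: "nat \<Rightarrow> nat \<Rightarrow> (nat \<Rightarrow> nat \<Rightarrow> 'a set) \<Rightarrow> (nat \<times> nat \<Rightarrow> 'a) pmf" where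
  "explore_policy k H Act =
     Pi_pmf ({1..k} \<times> {1..H}) undefined (\<lambda>(l, i). pmf_of_set (Act l i))"

text \<open>Q l i: probability that eta visits state (l,i) (level i is reached exactly
  once, at step i, so this is the probability that the label at level i is l).\<close>
definition visit_prob :: "nat \<Rightarrow> nat \<Rightarrow> (nat \<Rightarrow> nat \<Rightarrow> 'a set) \<Rightarrow>
    (nat \<Rightarrow> nat \<Rightarrow> 'a \<Rightarrow> nat pmf) \<Rightarrow> nat \<Rightarrow> nat \<Rightarrow> real" where
  "visit_prob k H Act P l i =
     measure_pmf.prob (bind_pmf (explore_policy k H Act) (\<lambda>e. traj P e (i - 1))) {l}"

end

theory Submission
  imports Defs
begin

text \<open>Split off the uniformly random action at the state (l, i) from the independent actions at
  all other states. The label reached at level i does not depend on that action, so Q l i is an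
  expectation over the other actions alone; and whatever value a that action takes, the walk
  reaches (s, i+1) through (l, i) with probability at least Q l i * p_i(s | l, a). Since a is
  chosen with probability 1 / |A l i| \<ge> 1 / A, the bound follows.\<close>

lemma pmf_bind_ge: "pmf M x * pmf (f x) y \<le> pmf (bind_pmf M f) y"
proof -
  have "ennreal (pmf M x * pmf (f x) y) =
      (\<integral>\<^sup>+z. ennreal (pmf (f x) y) * indicator {x} z \<partial>measure_pmf M)"
    by (simp add: nn_integral_cmult_indicator emeasure_pmf_single ennreal_mult' mult.commute)
  also have "\<dots> \<le> (\<integral>\<^sup>+z. pmf (f z) y \<partial>measure_pmf M)"
    by (intro nn_integral_mono) (simp split: split_indicator)
  also have "\<dots> = pmf (bind_pmf M f) y"
    by (simp add: ennreal_pmf_bind)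
  finally show ?thesis
    by simp
qed

lemma pmf_bind_Pi_pmf_remove:
  assumes "finite I" and "x \<in> I"
  shows "pmf (bind_pmf (Pi_pmf I d p) g) t =
    (\<integral>y. (\<integral>f. pmf (g (f(x := y))) t \<partial>Pi_pmf (I - {x}) d p) \<partial>p x)"
proof -
  have "Pi_pmf I d p = Pi_pmf (insert x (I - {x})) d p"
    using assms(2) by (simp add: insert_absorb)
  also have "\<dots> = do {y \<leftarrow> p x; f \<leftarrow> Pi_pmf (I - {x}) d p; return_pmf (f(x := y))}"
    using assms(1) by (intro Pi_pmf_insert') auto
  finally show ?thesis
    by (simp add: bind_assoc_pmf bind_return_pmf pmf_bind)
qed

lemma traj_cong: "(\<And>l j. j \<le> n \<Longrightarrow> e (l, j) = e' (l, j)) \<Longrightarrow> traj P e n = traj P e' n"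
  by (induction n) auto

lemma pmf_traj_Suc_ge:
  "pmf (traj P e n) l * pmf (P (Suc n) l (e (l, Suc n))) s \<le> pmf (traj P e (Suc n)) s"
  using pmf_bind_ge[of "traj P e n" l "\<lambda>l. P (Suc n) l (e (l, Suc n))"] by simp

lemma visit_prob_Suc_ge:
  assumes "finite (Act l i)" and "a \<in> Act l i" and "i \<in> {1..H}" and "l \<in> {1..k}"
  shows "visit_prob k H Act P l i * pmf (P i l a) s / card (Act l i)
           \<le> visit_prob k H Act P s (i + 1)"
proof -
  define x where "x = (l, i)"
  define F where "F = Pi_pmf ({1..k} \<times> {1..H} - {x}) undefined (\<lambda>(l, i). pmf_of_set (Act l i))"
  define R where "R y = (\<integral>f. pmf (traj P (f(x := y)) i) s \<partial>F)" for y
  have visit_prob_split: "visit_prob k H Act P t (Suc n) =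
      (\<integral>y. (\<integral>f. pmf (traj P (f(x := y)) n) t \<partial>F) \<partial>pmf_of_set (Act l i))" for t n
    unfolding visit_prob_def explore_policy_def F_def measure_pmf_single
    using assms(3,4) by (subst pmf_bind_Pi_pmf_remove) (auto simp: x_def)
  have i: "i = Suc (i - 1)"
    using assms(3) by simp
  have "Act l i \<noteq> {}"
    using assms(2) by blast
  have unchanged: "traj P (f(x := y)) (i - 1) = traj P f (i - 1)" for f y
    by (rule traj_cong) (use i in \<open>auto simp: x_def\<close>)
  have Q_l: "visit_prob k H Act P l i = (\<integral>f. pmf (traj P f (i - 1)) l \<partial>F)"
    using visit_prob_split[of l "i - 1", unfolded unchanged] i by simp
  have Q_s: "visit_prob k H Act P s (i + 1) = sum R (Act l i) / card (Act l i)"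
    using visit_prob_split[of s i] assms(1) \<open>Act l i \<noteq> {}\<close> by (simp add: R_def integral_pmf_of_set)
  have "visit_prob k H Act P l i * pmf (P i l a) s =
      (\<integral>f. pmf (traj P f (i - 1)) l * pmf (P i l a) s \<partial>F)"
    by (simp add: Q_l)
  also have "\<dots> \<le> R a"
    unfolding R_def
  proof (rule integral_mono)
    show "pmf (traj P f (i - 1)) l * pmf (P i l a) s \<le> pmf (traj P (f(x := a)) i) s" for f
      using pmf_traj_Suc_ge[of P "f(x := a)" "i - 1" l s, unfolded unchanged, folded i]
      by (simp add: x_def)
  qed (auto intro!: measure_pmf.integrable_const_bound[where B = 1] simp: pmf_le_1 mult_le_one)
  also have "\<dots> \<le> sum R (Act l i)"
    using assms(1,2) by (intro member_le_sum) (auto simp: R_def integral_nonneg)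
  finally show ?thesis
    unfolding Q_s by (rule divide_right_mono) simp
qed

theorem lemma1:
  fixes k H :: nat and Acts :: "'a set" and Act :: "nat \<Rightarrow> nat \<Rightarrow> 'a set"
    and P :: "nat \<Rightarrow> nat \<Rightarrow> 'a \<Rightarrow> nat pmf"
  assumes "finite Acts"
    and "\<And>l i. l \<in> {1..k} \<Longrightarrow> i \<in> {1..H} \<Longrightarrow> Act l i \<subseteq> Acts \<and> Act l i \<noteq> {}"
    and "\<And>i l a. i \<in> {1..H-1} \<Longrightarrow> l \<in> {1..k} \<Longrightarrow> a \<in> Acts \<Longrightarrow> set_pmf (P i l a) \<subseteq> {1..k}"
    and "i \<in> {1..H-1}" and "l \<in> {1..k}" and "s \<in> {1..k}"
  shows "visit_prob k H Act P s (i + 1)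
           \<ge> (MAX a \<in> Act l i. visit_prob k H Act P l i / real (card Acts) * pmf (P i l a) s)"
proof -
  have i: "i \<in> {1..H}"
    using assms(4) by auto
  have active: "Act l i \<subseteq> Acts" "Act l i \<noteq> {}" "finite (Act l i)"
    using assms(1,2,5) i finite_subset by blast+
  have "visit_prob k H Act P l i / card Acts * pmf (P i l a) s \<le> visit_prob k H Act P s (i + 1)"
    if a: "a \<in> Act l i" for a
  proof -
    have "card (Act l i) \<le> card Acts" "0 < card (Act l i)"
      using active assms(1) by (auto intro: card_mono simp: card_gt_0_iff)
    moreover have "0 \<le> visit_prob k H Act P l i * pmf (P i l a) s"
      by (simp add: visit_prob_def)
    ultimately have "visit_prob k H Act P l i / card Acts * pmf (P i l a) s
        \<le> visit_prob k H Act P l i * pmf (P i l a) s / card (Act l i)"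
      by (simp add: frac_le)
    also have "\<dots> \<le> visit_prob k H Act P s (i + 1)"
      using active(3) a i assms(5) by (rule visit_prob_Suc_ge)
    finally show ?thesis .
  qed
  then show ?thesis
    using active by (simp add: Max_le_iff)
qed

end
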